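(* Let $\lambda$ be a dominant integral weight of $\mathfrak{sl}_{r+1}$ and $b\in\mathcal B(\lambda+\rho)$. For $1\le j\le i\le r$, the entry $a_{i,j}$ of the BZL path $\psi_{\mathbf i}(b)$ is boxed by rule (B-I) if and only if the corresponding entry $\mathbf a_{i-j+1,i}$ of $\mathbf a(b)$ is boxed by rule (B-II).
   Context: Fix $r\ge1$ and $\mathfrak g=\mathfrak{sl}_{r+1}$ with index set $I=\{1,\dots,r\}$, fundamental weights $\omega_1,\dots,\omega_r$, $N=r(r+1)/2$, and $\rho=\sum_i\omega_i$. For a dominant integral weight $\mu=\sum_i m_i\omega_i$, $\mathcal B(\mu)$ is identified (Kashiwara–Nakashima) with the set of semistandard Young tableaux with entries in $\{1,\dots,r+1\}$ of the shape having $m_i$ columns of height $i$; an entry equal to $k$ is a $k$-box. A tableau is identified with the tensor product of its entries read column by column from right to left, each column top to bottom, and $\tilde e_i,\tilde f_i$ act by the signature rule: for each factor write $-$ if it equals $i+1$, $+$ if it equals $i$; repeatedly cancel adjacent $+-$ pairs; $\tilde e_i$ changes the factor of the rightmost remaining $-$ from $i+1$ to $i$ (giving $0$ if none), $\tilde f_i$ changes the factor of the leftmost remaining $+$ from $i$ to $i+1$ (giving $0$ if none). For dominant $\lambda$, $\lambda+\rho$ is viewed as the partition with row lengths $\ell_1>\ell_2>\cdots>\ell_r>\ell_{r+1}=0$, and $\theta_i=\ell_i-\ell_{i+1}$ for $1\le i\le r$. Fix the long word $\mathbf i=(i_1,\dots,i_N)=(1,2,1,3,2,1,\dots,r,\dots,2,1)$.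 The BZL path $\psi_{\mathbf i}(b)=(a_1,\dots,a_N)$: $a_k$ is maximal with $\tilde e_{i_k}^{a_k}\cdots\tilde e_{i_1}^{a_1}b\ne0$. Triangular form: $a_{i,j}=a_{i(i-1)/2+j}$ for $1\le j\le i\le r$. Rule (B-I): box $a_k$ if $\tilde f_{i_k}\tilde e_{i_{k-1}}^{a_{k-1}}\cdots\tilde e_{i_1}^{a_1}b=0$. For $b\in\mathcal B(\lambda+\rho)$ and $1\le i\le j\le r$: $\mathbf a_{i,j}$ is the number of $(j+1)$-boxes in rows $1$ through $i$ of $b$; $\mathbf b_{i,j}$ is the number of boxes in the $i$th row of $b$ with entry $\ge j+1$, with convention $\mathbf b_{i,j}=0$ if $i=r+1$ or $j=r+1$. Rule (B-II): box $\mathbf a_{i,j}$ if $\mathbf b_{i,j}\ge\theta_i+\mathbf b_{i+1,j+1}$. *)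

theory Defs
  imports Main
begin

text \<open>A word is the list of tensor factors (left to right). For a colour i, a factor
equal to i is a '+', a factor equal to i+1 is a '-'. Scanning left to right, each '-'
cancels the nearest uncancelled '+' to its left (this is exactly the result of
repeatedly cancelling adjacent +- pairs). sig_scan returns the positions of the
uncancelled '-' (increasing order) and of the uncancelled '+' (as a stack, decreasing order).\<close>

fun sig_scan :: "nat \<Rightarrow> nat \<Rightarrow> nat list \<Rightarrow> nat list \<Rightarrow> nat list \<Rightarrow> nat list \<times> nat list" where
  "sig_scan i p [] pl mn = (mn, pl)"
| "sig_scan i p (x # xs) pl mn =
     (if x = i then sig_scan i (Suc p) xs (p # pl) mn
      else if x = Suc i then
        (case pl of [] \<Rightarrow> sig_scan i (Suc p) xs [] (mn @ [p])
                    | q # qs \<Rightarrow> sig_scan i (Suc p) xs qs mn)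
      else sig_scan i (Suc p) xs pl mn)"

definition unmatched_minus :: "nat \<Rightarrow> nat list \<Rightarrow> nat list" where
  "unmatched_minus i w = fst (sig_scan i 0 w [] [])"

definition unmatched_plus :: "nat \<Rightarrow> nat list \<Rightarrow> nat list" where
  "unmatched_plus i w = snd (sig_scan i 0 w [] [])"

text \<open>e_i: change the rightmost remaining '-' from i+1 to i (None = 0).\<close>
definition e_word :: "nat \<Rightarrow> nat list \<Rightarrow> nat list option" where
  "e_word i w = (if unmatched_minus i w = [] then None
                 else Some (w[last (unmatched_minus i w) := i]))"

text \<open>f_i: change the leftmost remaining '+' from i to i+1 (None = 0).
The '+' stack is in decreasing order, so the leftmost one is its last element.\<close>
definition f_word :: "nat \<Rightarrow> nat list \<Rightarrow> nat list option" where
  "f_word i w = (if unmatched_plus i w = [] then None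
                 else Some (w[last (unmatched_plus i w) := Suc i]))"

fun e_pow :: "nat \<Rightarrow> nat \<Rightarrow> nat list \<Rightarrow> nat list option" where
  "e_pow i 0 w = Some w"
| "e_pow i (Suc k) w = Option.bind (e_pow i k w) (e_word i)"

definition eps :: "nat \<Rightarrow> nat list \<Rightarrow> nat" where
  "eps i w = (GREATEST a. e_pow i a w \<noteq> None)"

fun lw :: "nat \<Rightarrow> nat list" where
  "lw 0 = []"
| "lw (Suc i) = lw i @ rev [1..<Suc (Suc i)]"

fun bzl_apply :: "nat list \<Rightarrow> nat list \<Rightarrow> nat list" where
  "bzl_apply [] w = w"
| "bzl_apply (i # is) w = bzl_apply is (the (e_pow i (eps i w) w))"

definition bzl_path :: "nat \<Rightarrow> nat list \<Rightarrow> nat list" where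
  "bzl_path r w = map (\<lambda>k. eps (lw r ! k) (bzl_apply (take k (lw r)) w)) [0..<length (lw r)]"

text \<open>Rule (B-I): a_k (k 1-based) is boxed iff
  f_{i_k} e_{i_{k-1}}^{a_{k-1}} ... e_{i_1}^{a_1} b = 0.\<close>
definition boxed_BI :: "nat \<Rightarrow> nat list \<Rightarrow> nat \<Rightarrow> bool" where
  "boxed_BI r w k = (f_word (lw r ! (k - 1)) (bzl_apply (take (k - 1) (lw r)) w) = None)"

text \<open>Index of the triangular entry a_{i,j}.\<close>
definition tri_idx :: "nat \<Rightarrow> nat \<Rightarrow> nat" where
  "tri_idx i j = i * (i - 1) div 2 + j"

text \<open>lambda = sum m_i omega_i (only m 1..m r matter). Row lengths of lambda+rho:
  ell_i = sum_{k=i}^{r} (m_k + 1); ell_{r+1} = 0.\<close>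
definition ell :: "nat \<Rightarrow> (nat \<Rightarrow> nat) \<Rightarrow> nat \<Rightarrow> nat" where
  "ell r m i = (\<Sum>k = i..r. m k + 1)"

definition theta :: "nat \<Rightarrow> (nat \<Rightarrow> nat) \<Rightarrow> nat \<Rightarrow> nat" where
  "theta r m i = ell r m i - ell r m (Suc i)"

text \<open>A tableau T : row -> column -> entry (rows 1..r, columns 1..ell_i) that is
semistandard with entries in 1..r+1; this is B(lambda+rho).\<close>
definition SSYT :: "nat \<Rightarrow> (nat \<Rightarrow> nat) \<Rightarrow> (nat \<Rightarrow> nat \<Rightarrow> nat) \<Rightarrow> bool" where
  "SSYT r m T \<longleftrightarrow>
     (\<forall>i\<in>{1..r}. \<forall>c\<in>{1..ell r m i}. 1 \<le> T i c \<and> T i c \<le> Suc r) \<and>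
     (\<forall>i\<in>{1..r}. \<forall>c\<in>{1..<ell r m i}. T i c \<le> T i (Suc c)) \<and>
     (\<forall>i\<in>{1..<r}. \<forall>c\<in>{1..ell r m (Suc i)}. T i c < T (Suc i) c)"

definition col_height :: "nat \<Rightarrow> (nat \<Rightarrow> nat) \<Rightarrow> nat \<Rightarrow> nat" where
  "col_height r m c = card {i\<in>{1..r}. c \<le> ell r m i}"

definition reading_word :: "nat \<Rightarrow> (nat \<Rightarrow> nat) \<Rightarrow> (nat \<Rightarrow> nat \<Rightarrow> nat) \<Rightarrow> nat list" where
  "reading_word r m T =
     concat (map (\<lambda>c. map (\<lambda>i. T i c) [1..<Suc (col_height r m c)]) (rev [1..<Suc (ell r m 1)]))"

definition bold_a :: "nat \<Rightarrow> (nat \<Rightarrow> nat) \<Rightarrow> (nat \<Rightarrow> nat \<Rightarrow> nat) \<Rightarrow> nat \<Rightarrow> nat \<Rightarrow> nat" where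
  "bold_a r m T i j = (\<Sum>i'\<in>{1..i}. card {c\<in>{1..ell r m i'}. T i' c = Suc j})"

definition bold_b :: "nat \<Rightarrow> (nat \<Rightarrow> nat) \<Rightarrow> (nat \<Rightarrow> nat \<Rightarrow> nat) \<Rightarrow> nat \<Rightarrow> nat \<Rightarrow> nat" where
  "bold_b r m T i j = (if i = Suc r \<or> j = Suc r then 0
                       else card {c\<in>{1..ell r m i}. Suc j \<le> T i c})"

definition boxed_BII :: "nat \<Rightarrow> (nat \<Rightarrow> nat) \<Rightarrow> (nat \<Rightarrow> nat \<Rightarrow> nat) \<Rightarrow> nat \<Rightarrow> nat \<Rightarrow> bool" where
  "boxed_BII r m T i j \<longleftrightarrow> theta r m i + bold_b r m T (Suc i) (Suc j) \<le> bold_b r m T i j"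

end

theory Submission
  imports Defs
begin

text \<open>
  Running the long word 1, 21, 321, ... on the reading word of T, we show that
  just before the letter c of block i (i.e. after blocks 1..i-1 and after e_i,...,e_(c+1))
  the crystal element is again the reading word of an explicit tableau  stage T i c :
  entries at most i have moved up to their row index, entries i+1 in rows up to c have
  become c+1, all other entries are unchanged.  In this tableau, with p the number of
  entries at most i in row c and q the number of entries at most i+1 in row c+1, the
  columns right of p contain no letter c, the columns q+1..p contain one uncancelled c,
  and the columns 1..q contain a cancelling pair c, c+1.  Hence e_c lowers exactly the
  letters c+1 right of p (giving the next stage), and f_c vanishes iff p <= q, which is
  rule (B-II) once the bold b's are expressed through p and q.
\<close>

section \<open>The signature rule on words whose letters i+1 precede all letters i\<close>

definition neutral :: "nat \<Rightarrow> nat list \<Rightarrow> bool" where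
  "neutral i xs \<longleftrightarrow> (\<forall>x\<in>set xs. x \<noteq> i \<and> x \<noteq> Suc i)"

lemma sig_scan_append:
  "sig_scan i p (xs @ ys) pl mn =
     (case sig_scan i p xs pl mn of (mn', pl') \<Rightarrow> sig_scan i (p + length xs) ys pl' mn')"
  by (induction xs arbitrary: p pl mn) (auto split: list.split)

lemma sig_scan_neutral: "neutral i xs \<Longrightarrow> sig_scan i p xs pl mn = (mn, pl)"
  by (induction xs arbitrary: p pl mn) (auto simp: neutral_def)

lemma sig_scan_minus_extends: "\<exists>X. fst (sig_scan i p xs pl mn) = mn @ X"
proof (induction xs arbitrary: p pl mn)
  case (Cons x xs)
  obtain X1 X2 X3 X4 where "fst (sig_scan i (Suc p) xs (p # pl) mn) = mn @ X1"
    "fst (sig_scan i (Suc p) xs (tl pl) mn) = mn @ X2"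
    "fst (sig_scan i (Suc p) xs [] (mn @ [p])) = (mn @ [p]) @ X3"
    "fst (sig_scan i (Suc p) xs pl mn) = mn @ X4"
    using Cons.IH by metis
  then show ?case by (cases pl) auto
qed simp

lemma sig_scan_plus_bottom:
  "fst (sig_scan i p ys pl mn) = mn \<Longrightarrow>
   sig_scan i p ys (pl @ zs) mn = (mn, snd (sig_scan i p ys pl mn) @ zs)"
proof (induction ys arbitrary: p pl mn)
  case (Cons x xs)
  show ?case
  proof (cases "x = Suc i \<and> pl = []")
    case True
    obtain X where "fst (sig_scan i (Suc p) xs [] (mn @ [p])) = (mn @ [p]) @ X"
      using sig_scan_minus_extends by blast
    then show ?thesis using True Cons.prems by auto
  next
    case False
    then show ?thesis
      using Cons.prems Cons.IH[of "Suc p" "p # pl" mn] Cons.IH[of "Suc p" pl mn]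
        Cons.IH[of "Suc p" "tl pl" mn]
      by (cases pl) auto
  qed
qed simp

lemma sig_scan_no_plus: "i \<notin> set xs \<Longrightarrow> snd (sig_scan i p xs [] mn) = []"
  by (induction xs arbitrary: p mn) auto

definition no_unmatched_minus :: "nat \<Rightarrow> nat list \<Rightarrow> bool" where
  "no_unmatched_minus i ys \<longleftrightarrow> (\<forall>p mn. fst (sig_scan i p ys [] mn) = mn)"

lemma unmatched_minus_last:
  assumes "i \<notin> set xs" "neutral i zs" "no_unmatched_minus i ys"
  shows "unmatched_minus i (xs @ Suc i # zs @ ys) = fst (sig_scan i 0 xs [] []) @ [length xs]"
proof -
  obtain mn pl where scan: "sig_scan i 0 xs [] [] = (mn, pl)" by fastforce
  with sig_scan_no_plus[OF assms(1), of 0 "[]"] have "pl = []" by simp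
  with scan assms(2,3) show ?thesis
    by (simp add: unmatched_minus_def sig_scan_append sig_scan_neutral no_unmatched_minus_def)
qed

lemma e_word_last_minus:
  assumes "i \<notin> set xs" "neutral i zs" "no_unmatched_minus i ys"
  shows "e_word i (xs @ Suc i # zs @ ys) = Some (xs @ i # zs @ ys)"
  using unmatched_minus_last[OF assms] by (simp add: e_word_def list_update_append)

lemma e_word_neutral:
  assumes "neutral i xs" "no_unmatched_minus i ys"
  shows "e_word i (xs @ ys) = None"
  using assms
  by (simp add: e_word_def unmatched_minus_def sig_scan_append sig_scan_neutral no_unmatched_minus_def)

lemma no_unmatched_minus_plus_Cons:
  assumes "neutral i zs" "no_unmatched_minus i ys"
  shows "no_unmatched_minus i (i # zs @ ys)"
  unfolding no_unmatched_minus_def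
proof (intro allI)
  fix p mn
  have "fst (sig_scan i (Suc p + length zs) ys [] mn) = mn"
    using assms(2) by (simp add: no_unmatched_minus_def)
  then have "fst (sig_scan i (Suc p + length zs) ys ([] @ [p]) mn) = mn"
    using sig_scan_plus_bottom[of i "Suc p + length zs" ys "[]" mn "[p]"] by simp
  then show "fst (sig_scan i p (i # zs @ ys) [] mn) = mn"
    using assms(1) by (simp add: sig_scan_append sig_scan_neutral)
qed

lemma e_pow_Suc_first: "e_pow i (Suc n) w = Option.bind (e_word i w) (e_pow i n)"
proof (induction n arbitrary: w)
  case 0 then show ?case by (cases "e_word i w") auto
next
  case (Suc n)
  have "e_pow i (Suc (Suc n)) w = Option.bind (e_pow i (Suc n) w) (e_word i)" by simp
  also have "\<dots> = Option.bind (Option.bind (e_word i w) (e_pow i n)) (e_word i)"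
    by (simp only: Suc)
  also have "\<dots> = Option.bind (e_word i w) (e_pow i (Suc n))" by (cases "e_word i w") auto
  finally show ?case .
qed

lemma e_pow_None_mono:
  assumes "e_pow i k w = None" "k \<le> k'"
  shows "e_pow i k' w = None"
  using assms(2) by (induction k' rule: dec_induct) (simp_all add: assms(1))

definition lower :: "nat \<Rightarrow> nat \<Rightarrow> nat" where
  "lower i x = (if x = Suc i then i else x)"

lemma e_pow_exhaust:
  "i \<notin> set xs \<Longrightarrow> no_unmatched_minus i ys \<Longrightarrow> length (filter (\<lambda>x. x = Suc i) xs) = n \<Longrightarrow>
   e_pow i n (xs @ ys) = Some (map (lower i) xs @ ys) \<and> e_pow i (Suc n) (xs @ ys) = None"
proof (induction n arbitrary: xs ys)
  case 0
  then have "neutral i xs" by (auto simp: neutral_def filter_empty_conv)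
  moreover from this have "map (lower i) xs = xs" by (auto simp: neutral_def lower_def intro: map_idI)
  ultimately show ?case using e_word_neutral 0(2) by simp
next
  case (Suc n)
  then have "filter (\<lambda>x. x = Suc i) xs \<noteq> []" by auto
  then have "Suc i \<in> set xs" by (auto simp: filter_empty_conv)
  then obtain xs1 zs where xs: "xs = xs1 @ Suc i # zs" "Suc i \<notin> set zs"
    by (meson split_list_last)
  have zs: "neutral i zs" and xs1: "i \<notin> set xs1" using xs Suc.prems(1) by (auto simp: neutral_def)
  have step: "e_word i (xs @ ys) = Some (xs1 @ (i # zs @ ys))"
    using e_word_last_minus[OF xs1 zs Suc.prems(2)] xs by simp
  have "filter (\<lambda>x. x = Suc i) zs = []" using xs(2) by (auto simp: filter_empty_conv)
  then have "length (filter (\<lambda>x. x = Suc i) xs1) = n" using Suc.prems(3) xs by simp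
  from Suc.IH[OF xs1 no_unmatched_minus_plus_Cons[OF zs Suc.prems(2)] this]
  have IH: "e_pow i n (xs1 @ (i # zs @ ys)) = Some (map (lower i) xs1 @ (i # zs @ ys))"
    "e_pow i (Suc n) (xs1 @ (i # zs @ ys)) = None" by auto
  have "map (lower i) zs = zs" using zs by (auto simp: neutral_def lower_def intro: map_idI)
  then have "map (lower i) xs @ ys = map (lower i) xs1 @ (i # zs @ ys)"
    using xs by (simp add: lower_def)
  moreover have "e_pow i (Suc k) (xs @ ys) = e_pow i k (xs1 @ (i # zs @ ys))" for k
    using step by (simp only: e_pow_Suc_first) simp
  ultimately show ?case using IH by simp
qed

lemma eps_exhaust:
  assumes "i \<notin> set xs" "no_unmatched_minus i ys"
  shows "eps i (xs @ ys) = length (filter (\<lambda>x. x = Suc i) xs)"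
    and "the (e_pow i (eps i (xs @ ys)) (xs @ ys)) = map (lower i) xs @ ys"
proof -
  let ?n = "length (filter (\<lambda>x. x = Suc i) xs)"
  note E = e_pow_exhaust[OF assms refl]
  show eps: "eps i (xs @ ys) = ?n"
    unfolding eps_def
  proof (rule Greatest_equality)
    show "e_pow i ?n (xs @ ys) \<noteq> None" using E by simp
    show "y \<le> ?n" if "e_pow i y (xs @ ys) \<noteq> None" for y
      using that e_pow_None_mono[of i "Suc ?n"] E by (meson not_less_eq_eq)
  qed
  show "the (e_pow i (eps i (xs @ ys)) (xs @ ys)) = map (lower i) xs @ ys"
    using eps E by simp
qed

lemma f_word_None_iff:
  assumes "i \<notin> set xs"
  shows "f_word i (xs @ ys) = None \<longleftrightarrow>
         snd (sig_scan i (length xs) ys [] (fst (sig_scan i 0 xs [] []))) = []"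
proof -
  obtain mn pl where scan: "sig_scan i 0 xs [] [] = (mn, pl)" by fastforce
  with sig_scan_no_plus[OF assms, of 0 "[]"] have "pl = []" by simp
  with scan show ?thesis by (simp add: f_word_def unmatched_plus_def sig_scan_append)
qed

lemma bzl_apply_append: "bzl_apply (xs @ ys) w = bzl_apply ys (bzl_apply xs w)"
  by (induction xs arbitrary: w) auto

section \<open>Semistandard tableaux\<close>

lemma downward_closed_initial_segment:
  assumes "S \<subseteq> {1..(n::nat)}" "\<And>x y. x \<in> S \<Longrightarrow> 1 \<le> y \<Longrightarrow> y \<le> x \<Longrightarrow> y \<in> S"
  shows "S = {1..card S}"
proof (cases "S = {}")
  case False
  have "finite S" using assms(1) finite_subset by blast
  with False have "Max S \<in> S" by simp
  with assms \<open>finite S\<close> have "S = {1..Max S}" by (auto intro!: Max_ge)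
  then show ?thesis by (metis card_atLeastAtMost diff_Suc_1)
qed simp

locale ssyt =
  fixes r :: nat and m :: "nat \<Rightarrow> nat" and T :: "nat \<Rightarrow> nat \<Rightarrow> nat"
  assumes semistandard: "SSYT r m T"
begin

abbreviation L :: "nat \<Rightarrow> nat" where "L \<equiv> ell r m"

lemma ell_beyond: "r < k \<Longrightarrow> L k = 0"
  unfolding ell_def by simp

lemma ell_antimono: "k \<le> k' \<Longrightarrow> L k' \<le> L k"
  unfolding ell_def by (rule sum_mono2) auto

lemma row_nonempty: "1 \<le> L k \<Longrightarrow> k \<le> r"
  using ell_beyond by (metis not_le not_one_le_zero)

definition cell :: "nat \<Rightarrow> nat \<Rightarrow> bool" where
  "cell k col \<longleftrightarrow> 1 \<le> k \<and> k \<le> r \<and> 1 \<le> col \<and> col \<le> L k"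

lemma cell_above: "cell k' col \<Longrightarrow> 1 \<le> k \<Longrightarrow> k \<le> k' \<Longrightarrow> cell k col"
  unfolding cell_def using ell_antimono by (meson le_trans)

text \<open>Column col consists of the rows 1..col_height; this identifies the letters of the
  column word with the cells of the column.\<close>

lemma column_rows: "{k\<in>{1..r}. col \<le> L k} = {1..col_height r m col}"
  unfolding col_height_def
proof (rule downward_closed_initial_segment[of _ r])
  fix x y assume x: "x \<in> {k\<in>{1..r}. col \<le> L k}" and y: "1 \<le> y" "y \<le> x"
  then have "col \<le> L y" using ell_antimono[of y x] by simp
  with x y show "y \<in> {k\<in>{1..r}. col \<le> L k}" by simp
qed auto

lemma cell_in_column: "1 \<le> col \<Longrightarrow> k \<in> {1..col_height r m col} \<longleftrightarrow> cell k col"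
proof -
  have "k \<in> {1..col_height r m col} \<longleftrightarrow> k \<in> {k\<in>{1..r}. col \<le> L k}"
    by (simp only: column_rows)
  then show "1 \<le> col \<Longrightarrow> ?thesis" unfolding cell_def by auto
qed

lemma entry_range: "cell k col \<Longrightarrow> 1 \<le> T k col \<and> T k col \<le> Suc r"
  using semistandard unfolding SSYT_def cell_def by auto

lemma row_weak: "cell k col' \<Longrightarrow> 1 \<le> col \<Longrightarrow> col \<le> col' \<Longrightarrow> T k col \<le> T k col'"
proof (induction col')
  case (Suc n)
  show ?case
  proof (cases "col = Suc n")
    case False
    then have "col \<le> n" "cell k n" using Suc.prems unfolding cell_def by auto
    have "T k col \<le> T k n" using Suc.IH[OF \<open>cell k n\<close> Suc.prems(2) \<open>col \<le> n\<close>] .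
    also have "\<dots> \<le> T k (Suc n)"
      using semistandard Suc.prems \<open>col \<le> n\<close> unfolding SSYT_def cell_def by auto
    finally show ?thesis .
  qed simp
qed simp

lemma column_strict: "cell k' col \<Longrightarrow> 1 \<le> k \<Longrightarrow> k < k' \<Longrightarrow> T k col < T k' col"
proof (induction k')
  case (Suc n)
  then have "cell n col" "T n col < T (Suc n) col"
    using cell_above[of "Suc n" col n] semistandard unfolding SSYT_def cell_def by auto
  then show ?case using Suc by (cases "k = n") auto
qed simp

lemma column_weak: "cell k' col \<Longrightarrow> 1 \<le> k \<Longrightarrow> k \<le> k' \<Longrightarrow> T k col \<le> T k' col"
  using column_strict by (metis le_eq_less_or_eq less_imp_le)

text \<open>Column strictness forces the entry in row k to be at least k.\<close>

lemma entry_ge_row: "cell k col \<Longrightarrow> k \<le> T k col"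
proof (induction k)
  case (Suc n)
  show ?case
  proof (cases "n = 0")
    case False
    then have "cell n col" using Suc.prems cell_above[of "Suc n" col n] by simp
    then show ?thesis using Suc column_strict[OF Suc.prems, of n] False by fastforce
  qed (use entry_range[OF Suc.prems] in simp)
qed simp

text \<open>The number of entries at most v in row k; by weak row monotonicity these entries
  occupy exactly the first row_count k v columns.\<close>

definition row_count :: "nat \<Rightarrow> nat \<Rightarrow> nat" where
  "row_count k v = card {col\<in>{1..L k}. T k col \<le> v}"

lemma row_count_prefix:
  assumes "1 \<le> k"
  shows "{col\<in>{1..L k}. T k col \<le> v} = {1..row_count k v}"
  unfolding row_count_def
proof (rule downward_closed_initial_segment[of _ "L k"])
  fix x y assume x: "x \<in> {col\<in>{1..L k}. T k col \<le> v}" and y: "1 \<le> y" "y \<le> x"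
  then have "cell k x" using assms row_nonempty[of k] by (auto simp: cell_def)
  with x y row_weak[of k x y] show "y \<in> {col\<in>{1..L k}. T k col \<le> v}" by auto
qed auto

lemma row_count_iff:
  assumes "1 \<le> k" "1 \<le> col" "col \<le> L k"
  shows "T k col \<le> v \<longleftrightarrow> col \<le> row_count k v"
proof -
  have "col \<in> {col\<in>{1..L k}. T k col \<le> v} \<longleftrightarrow> col \<in> {1..row_count k v}"
    by (simp only: row_count_prefix[OF assms(1)])
  with assms show ?thesis by auto
qed

lemma row_count_le: "row_count k v \<le> L k"
proof -
  have "card {col\<in>{1..L k}. T k col \<le> v} \<le> card {1..L k}" by (rule card_mono) auto
  then show ?thesis unfolding row_count_def by simp
qed

end

section \<open>Stage tableaux and one crystal step\<close>

text \<open>The tableau reached inside block i of the long word just before the letter c: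
  entries at most i sit at their row index, an entry i+1 in a row k is lowered to
  max k (c+1), larger entries are untouched.\<close>

definition stage :: "(nat \<Rightarrow> nat \<Rightarrow> nat) \<Rightarrow> nat \<Rightarrow> nat \<Rightarrow> nat \<Rightarrow> nat \<Rightarrow> nat" where
  "stage T i c k col =
     (if Suc i < T k col then T k col
      else if T k col \<le> i then k
      else if k \<le> c then Suc c else k)"

lemma upt_split: "a \<le> b \<Longrightarrow> b \<le> d \<Longrightarrow> [a..<d] = [a..<b] @ [b..<d]"
  using upt_add_eq_append[of a b "d - b"] by simp

definition column_word :: "nat \<Rightarrow> (nat \<Rightarrow> nat) \<Rightarrow> (nat \<Rightarrow> nat \<Rightarrow> nat) \<Rightarrow> nat \<Rightarrow> nat list" where
  "column_word r m S col = map (\<lambda>k. S k col) [1..<Suc (col_height r m col)]"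

definition columns_word :: "nat \<Rightarrow> (nat \<Rightarrow> nat) \<Rightarrow> (nat \<Rightarrow> nat \<Rightarrow> nat) \<Rightarrow> nat \<Rightarrow> nat \<Rightarrow> nat list" where
  "columns_word r m S a b = concat (map (column_word r m S) (rev [a..<b]))"

lemma reading_word_columns: "reading_word r m S = columns_word r m S 1 (Suc (ell r m 1))"
  unfolding reading_word_def columns_word_def column_word_def ..

lemma columns_word_split:
  "a \<le> b \<Longrightarrow> b \<le> d \<Longrightarrow> columns_word r m S a d = columns_word r m S b d @ columns_word r m S a b"
  unfolding columns_word_def by (simp add: upt_split[of a b d])

lemma columns_word_map:
  assumes "\<And>col k. a \<le> col \<Longrightarrow> col < b \<Longrightarrow> k \<in> {1..col_height r m col} \<Longrightarrow> S' k col = f (S k col)"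
  shows "columns_word r m S' a b = map f (columns_word r m S a b)"
  using assms by (auto simp: columns_word_def column_word_def map_concat intro!: arg_cong[of _ _ concat])

lemma scan_single_plus_columns:
  assumes "\<forall>w\<in>set ws. \<exists>us vs. w = us @ c # vs \<and> neutral c us \<and> neutral c vs"
  shows "fst (sig_scan c P (concat ws) pl mn) = mn \<and>
         length (snd (sig_scan c P (concat ws) pl mn)) = length ws + length pl"
  using assms
proof (induction ws arbitrary: P pl)
  case (Cons w ws)
  then obtain us vs where w: "w = us @ c # vs" "neutral c us" "neutral c vs" by auto
  then have "sig_scan c P w pl mn = (mn, (P + length us) # pl)"
    by (simp add: sig_scan_append sig_scan_neutral)
  then have "sig_scan c P (concat (w # ws)) pl mn =
             sig_scan c (P + length w) (concat ws) ((P + length us) # pl) mn"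
    by (simp add: sig_scan_append)
  then show ?case using Cons by simp
qed simp

lemma scan_cancelling_columns:
  assumes "\<forall>w\<in>set ws. \<exists>us vs. w = us @ c # Suc c # vs \<and> neutral c us \<and> neutral c vs"
  shows "sig_scan c P (concat ws) pl mn = (mn, pl)"
  using assms
proof (induction ws arbitrary: P)
  case (Cons w ws)
  then obtain us vs where w: "w = us @ c # Suc c # vs" "neutral c us" "neutral c vs" by auto
  then have "sig_scan c P w pl mn = (mn, pl)"
    by (simp add: sig_scan_append sig_scan_neutral)
  then have "sig_scan c P (concat (w # ws)) pl mn = sig_scan c (P + length w) (concat ws) pl mn"
    by (simp add: sig_scan_append)
  then show ?case using Cons by simp
qed simp

context ssyt
begin

text \<open>From here on we are inside block i at the letter c, with p = row_count c i and
  q = row_count (Suc c) (Suc i).\<close>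

context
  fixes i c :: nat
  assumes bounds: "1 \<le> c" "c \<le> i" "i \<le> r"
begin

lemma entries_left_small:
  assumes "cell k col" "col \<le> row_count c i" "k \<le> c"
  shows "T k col \<le> i"
proof -
  have "cell c col" using assms bounds row_count_le[of c i] unfolding cell_def by auto
  then have "T c col \<le> i" using row_count_iff[of c col i] assms bounds by (auto simp: cell_def)
  moreover have "T k col \<le> T c col" using column_weak[OF \<open>cell c col\<close>] assms by (auto simp: cell_def)
  ultimately show ?thesis by simp
qed

lemma entries_right_big:
  assumes "cell (Suc c) col" "row_count c i < col"
  shows "Suc i < T (Suc c) col"
proof -
  have "cell c col" using cell_above[OF assms(1) bounds(1)] by simp
  then have "i < T c col" using row_count_iff[of c col i] assms bounds by (auto simp: cell_def)
  with column_strict[OF assms(1) bounds(1)] show ?thesis by simp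
qed

lemma stage_right_no_c:
  assumes "cell k col" "row_count c i < col"
  shows "stage T i c k col \<noteq> c"
proof -
  have "k = c \<Longrightarrow> T k col \<le> i \<Longrightarrow> False"
    using row_count_iff[of c col i] assms bounds by (auto simp: cell_def)
  then show ?thesis using bounds by (auto simp: stage_def)
qed

lemma stage_right_lower:
  assumes "cell k col" "row_count c i < col"
  shows "stage T i (c - 1) k col = lower c (stage T i c k col)"
proof -
  have "k = Suc c \<Longrightarrow> T k col \<le> Suc i \<Longrightarrow> False" using entries_right_big assms by fastforce
  then show ?thesis using bounds by (auto simp: stage_def lower_def)
qed

lemma stage_left_keep:
  assumes "cell k col" "col \<le> row_count c i"
  shows "stage T i (c - 1) k col = stage T i c k col"
  using entries_left_small[OF assms] bounds by (auto simp: stage_def)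

text \<open>q never exceeds p, since row c+1 dominates row c strictly columnwise.\<close>

lemma row_count_next_le: "row_count (Suc c) (Suc i) \<le> row_count c i"
proof (cases "row_count (Suc c) (Suc i) = 0")
  case False
  let ?q = "row_count (Suc c) (Suc i)"
  have "?q \<le> L (Suc c)" by (rule row_count_le)
  with False have "cell (Suc c) ?q" using row_nonempty[of "Suc c"] by (auto simp: cell_def)
  moreover have "T (Suc c) ?q \<le> Suc i"
    using row_count_iff[of "Suc c" ?q] False \<open>?q \<le> L (Suc c)\<close> by simp
  ultimately show ?thesis using entries_right_big by fastforce
qed simp

lemma stage_column_top:
  assumes "1 \<le> col" "col \<le> row_count c i"
  shows "neutral c (map (\<lambda>k. stage T i c k col) [1..<c])"
proof -
  have "cell c col" using assms bounds row_count_le[of c i] unfolding cell_def by auto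
  have "stage T i c k col = k" if "1 \<le> k" "k < c" for k
  proof -
    have "cell k col" using cell_above[OF \<open>cell c col\<close>] that by simp
    with entries_left_small[of k col] assms that have "T k col \<le> i" by simp
    then show ?thesis by (simp add: stage_def)
  qed
  then show ?thesis by (auto simp: neutral_def)
qed

lemma stage_column_single_plus:
  assumes "row_count (Suc c) (Suc i) < col" "col \<le> row_count c i"
  shows "\<exists>us vs. column_word r m (stage T i c) col = us @ c # vs \<and> neutral c us \<and> neutral c vs"
proof -
  let ?h = "col_height r m col" and ?S = "\<lambda>k. stage T i c k col"
  have "1 \<le> col" using assms by simp
  have "cell c col" using assms bounds row_count_le[of c i] unfolding cell_def by auto
  then have "c \<le> ?h" using cell_in_column[OF \<open>1 \<le> col\<close>, of c] by auto
  then have rows: "[1..<Suc ?h] = [1..<c] @ c # [Suc c..<Suc ?h]"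
    using upt_split[of 1 c "Suc ?h"] upt_conv_Cons[of c "Suc ?h"] bounds by simp
  have "?S c = c" using row_count_iff[of c col i] assms bounds \<open>cell c col\<close>
    by (auto simp: stage_def cell_def)
  then have word: "column_word r m (stage T i c) col = map ?S [1..<c] @ c # map ?S [Suc c..<Suc ?h]"
    unfolding column_word_def rows by simp
  have "?S k \<noteq> c \<and> ?S k \<noteq> Suc c" if "Suc c \<le> k" "k \<le> ?h" for k
  proof -
    have "cell k col" using cell_in_column[OF \<open>1 \<le> col\<close>, of k] that by auto
    then have "k = Suc c \<Longrightarrow> Suc i < T k col"
      using row_count_iff[of c col i] row_count_iff[of "Suc c" col "Suc i"] assms
      by (auto simp: cell_def)
    then show ?thesis using that bounds by (auto simp: stage_def)
  qed
  then have "neutral c (map ?S [Suc c..<Suc ?h])" by (auto simp: neutral_def)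
  with word stage_column_top[OF \<open>1 \<le> col\<close> assms(2)] show ?thesis by blast
qed

lemma stage_column_cancelling:
  assumes "1 \<le> col" "col \<le> row_count (Suc c) (Suc i)"
  shows "\<exists>us vs. column_word r m (stage T i c) col = us @ c # Suc c # vs \<and>
                 neutral c us \<and> neutral c vs"
proof -
  let ?h = "col_height r m col" and ?S = "\<lambda>k. stage T i c k col"
  have p: "col \<le> row_count c i" using row_count_next_le assms by simp
  have "cell c col" using assms p bounds row_count_le[of c i] unfolding cell_def by auto
  have q: "col \<le> L (Suc c)" using row_count_le[of "Suc c" "Suc i"] assms by simp
  then have "cell (Suc c) col" using row_nonempty[of "Suc c"] assms by (auto simp: cell_def)
  then have "Suc c \<le> ?h" using cell_in_column[OF assms(1), of "Suc c"] by auto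
  then have rows: "[1..<Suc ?h] = [1..<c] @ c # Suc c # [Suc (Suc c)..<Suc ?h]"
    using upt_split[of 1 c "Suc ?h"] upt_conv_Cons[of c "Suc ?h"]
      upt_conv_Cons[of "Suc c" "Suc ?h"] bounds by simp
  have "?S c = c" using row_count_iff[of c col i] assms p bounds \<open>cell c col\<close>
    by (auto simp: stage_def cell_def)
  moreover have "?S (Suc c) = Suc c"
    using row_count_iff[of "Suc c" col "Suc i"] assms q by (auto simp: stage_def)
  ultimately have word: "column_word r m (stage T i c) col =
      map ?S [1..<c] @ c # Suc c # map ?S [Suc (Suc c)..<Suc ?h]"
    unfolding column_word_def rows by simp
  have "neutral c (map ?S [Suc (Suc c)..<Suc ?h])"
    using bounds by (auto simp: neutral_def stage_def)
  with word stage_column_top[OF assms(1) p] show ?thesis by blast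
qed

lemma split_column_le: "row_count c i \<le> L 1"
  using row_count_le[of c i] ell_antimono[of 1 c] bounds by simp

lemma reading_word_at_split:
  "reading_word r m S =
   columns_word r m S (Suc (row_count c i)) (Suc (L 1)) @ columns_word r m S 1 (Suc (row_count c i))"
  using reading_word_columns columns_word_split split_column_le by simp

lemma right_part_no_c:
  "c \<notin> set (columns_word r m (stage T i c) (Suc (row_count c i)) (Suc (L 1)))"
proof
  assume "c \<in> set (columns_word r m (stage T i c) (Suc (row_count c i)) (Suc (L 1)))"
  then obtain col where col: "row_count c i < col" "col \<le> L 1"
    "c \<in> set (column_word r m (stage T i c) col)"
    unfolding columns_word_def by (auto simp: Suc_le_eq less_Suc_eq_le simp del: upt_Suc)
  then have "c \<in> (\<lambda>k. stage T i c k col) ` {1..col_height r m col}"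
    unfolding column_word_def by auto
  then obtain k where "k \<in> {1..col_height r m col}" "stage T i c k col = c" by auto
  with col cell_in_column[of col k] stage_right_no_c[of k col] show False by simp
qed

lemma right_part_lowered:
  "columns_word r m (stage T i (c - 1)) (Suc (row_count c i)) (Suc (L 1)) =
   map (lower c) (columns_word r m (stage T i c) (Suc (row_count c i)) (Suc (L 1)))"
proof (rule columns_word_map)
  fix col k assume "Suc (row_count c i) \<le> col" "col < Suc (L 1)" "k \<in> {1..col_height r m col}"
  then show "stage T i (c - 1) k col = lower c (stage T i c k col)"
    using cell_in_column[of col k] stage_right_lower[of k col] by simp
qed

lemma left_part_kept:
  "columns_word r m (stage T i (c - 1)) 1 (Suc (row_count c i)) =
   columns_word r m (stage T i c) 1 (Suc (row_count c i))"
proof -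
  have "columns_word r m (stage T i (c - 1)) 1 (Suc (row_count c i)) =
        map id (columns_word r m (stage T i c) 1 (Suc (row_count c i)))"
  proof (rule columns_word_map)
    fix col k assume "1 \<le> col" "col < Suc (row_count c i)" "k \<in> {1..col_height r m col}"
    with split_column_le show "stage T i (c - 1) k col = id (stage T i c k col)"
      using cell_in_column[of col k] stage_left_keep[of k col] by simp
  qed
  then show ?thesis by simp
qed

text \<open>In the columns up to the split point, every column carries one c, and those up to
  the next-row count additionally carry a cancelling c+1; hence the left part has no
  uncancelled minus and exactly p - q uncancelled plus signs.\<close>

lemma left_part_scan:
  "fst (sig_scan c P (columns_word r m (stage T i c) 1 (Suc (row_count c i))) [] mn) = mn \<and>
   length (snd (sig_scan c P (columns_word r m (stage T i c) 1 (Suc (row_count c i))) [] mn)) =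
     row_count c i - row_count (Suc c) (Suc i)"
proof -
  let ?p = "row_count c i" and ?q = "row_count (Suc c) (Suc i)"
  let ?W = "columns_word r m (stage T i c)"
  have split: "?W 1 (Suc ?p) = ?W (Suc ?q) (Suc ?p) @ ?W 1 (Suc ?q)"
    using columns_word_split row_count_next_le by simp
  have single: "\<forall>w\<in>set (map (column_word r m (stage T i c)) (rev [Suc ?q..<Suc ?p])).
      \<exists>us vs. w = us @ c # vs \<and> neutral c us \<and> neutral c vs"
    using stage_column_single_plus by auto
  have pairs: "\<forall>w\<in>set (map (column_word r m (stage T i c)) (rev [1..<Suc ?q])).
      \<exists>us vs. w = us @ c # Suc c # vs \<and> neutral c us \<and> neutral c vs"
    using stage_column_cancelling by auto
  obtain mn' pl where right: "sig_scan c P (?W (Suc ?q) (Suc ?p)) [] mn = (mn', pl)" by fastforce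
  with scan_single_plus_columns[OF single, of P "[]" mn]
  have "mn' = mn" "length pl = ?p - ?q" by (auto simp: columns_word_def)
  moreover have "sig_scan c (P + length (?W (Suc ?q) (Suc ?p))) (?W 1 (Suc ?q)) pl mn' = (mn', pl)"
    using scan_cancelling_columns[OF pairs] by (simp add: columns_word_def)
  ultimately show ?thesis unfolding split sig_scan_append right by simp
qed

lemma stage_e_step:
  "bzl_apply [c] (reading_word r m (stage T i c)) = reading_word r m (stage T i (c - 1))"
proof -
  have "no_unmatched_minus c (columns_word r m (stage T i c) 1 (Suc (row_count c i)))"
    using left_part_scan by (simp add: no_unmatched_minus_def)
  note lowered = eps_exhaust(2)[OF right_part_no_c this]
  show ?thesis
    unfolding reading_word_at_split bzl_apply.simps lowered right_part_lowered left_part_kept ..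
qed

lemma stage_f_none:
  "f_word c (reading_word r m (stage T i c)) = None \<longleftrightarrow>
   row_count c i \<le> row_count (Suc c) (Suc i)"
  unfolding reading_word_at_split f_word_None_iff[OF right_part_no_c]
  using left_part_scan by (simp flip: length_0_conv)

end

end

section \<open>Iteration along the long word and rule (B-II)\<close>

context ssyt
begin

lemma reading_word_cong:
  assumes "\<And>k col. cell k col \<Longrightarrow> S' k col = S k col"
  shows "reading_word r m S' = reading_word r m S"
proof -
  have "columns_word r m S' 1 (Suc (L 1)) = map id (columns_word r m S 1 (Suc (L 1)))"
    by (rule columns_word_map) (use assms cell_in_column in auto)
  then show ?thesis by (simp add: reading_word_columns)
qed

lemma stage_block:
  assumes "c \<le> i" "i \<le> r"
  shows "bzl_apply (rev [Suc c..<Suc i]) (reading_word r m (stage T i i)) =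
         reading_word r m (stage T i c)"
  using assms
proof (induction "i - c" arbitrary: c)
  case (Suc d)
  then have "rev [Suc c..<Suc i] = rev [Suc (Suc c)..<Suc i] @ [Suc c]"
    using upt_conv_Cons[of "Suc c" "Suc i"] by simp
  then have "bzl_apply (rev [Suc c..<Suc i]) (reading_word r m (stage T i i)) =
             bzl_apply [Suc c] (reading_word r m (stage T i (Suc c)))"
    using Suc by (simp add: bzl_apply_append)
  also have "\<dots> = reading_word r m (stage T i c)"
    using stage_e_step[where c = "Suc c" and i = i] Suc.prems Suc.hyps by simp
  finally show ?case .
qed simp

text \<open>Column strictness (entries in row k are at least k) makes the stage at the start
  of block i agree with the stage at the end of block i-1, and stage 1 with T itself.\<close>

lemma stage_first: "cell k col \<Longrightarrow> stage T 1 1 k col = T k col"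
  using entry_ge_row[of k col] by (auto simp: stage_def cell_def)

lemma stage_next_block: "cell k col \<Longrightarrow> stage T i 0 k col = stage T (Suc i) (Suc i) k col"
  using entry_ge_row[of k col] by (auto simp: stage_def cell_def)

lemma stage_after_blocks:
  "1 \<le> i \<Longrightarrow> i \<le> r \<Longrightarrow> bzl_apply (lw (i - 1)) (reading_word r m T) = reading_word r m (stage T i i)"
proof (induction i)
  case (Suc n)
  show ?case
  proof (cases "n = 0")
    case True
    then show ?thesis using reading_word_cong[OF stage_first] by simp
  next
    case False
    then have "lw n = lw (n - 1) @ rev [1..<Suc n]" using lw.simps(2)[of "n - 1"] by simp
    then have "bzl_apply (lw n) (reading_word r m T) =
               bzl_apply (rev [Suc 0..<Suc n]) (reading_word r m (stage T n n))"
      using Suc False by (simp add: bzl_apply_append)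
    also have "\<dots> = reading_word r m (stage T n 0)" using stage_block[of 0 n] Suc.prems by simp
    also have "\<dots> = reading_word r m (stage T (Suc n) (Suc n))"
      using reading_word_cong[OF stage_next_block] by simp
    finally show ?thesis by simp
  qed
qed simp

text \<open>The bold b's are complementary row counts (including the conventions for row or
  entry r+1), which turns rule (B-II) into the inequality p <= q.\<close>

lemma bold_b_row_count:
  assumes "1 \<le> k" "k \<le> Suc r" "j \<le> Suc r"
  shows "bold_b r m T k j = L k - row_count k j"
proof -
  have "{col\<in>{1..L k}. Suc j \<le> T k col} = {1..L k} - {col\<in>{1..L k}. T k col \<le> j}" by auto
  moreover have "card ({1..L k} - {col\<in>{1..L k}. T k col \<le> j}) = card {1..L k} - row_count k j"
    unfolding row_count_def by (rule card_Diff_subset) auto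
  ultimately have complement: "card {col\<in>{1..L k}. Suc j \<le> T k col} = L k - row_count k j"
    by simp
  show ?thesis
  proof (cases "k = Suc r \<or> j = Suc r")
    case True
    have "row_count k j = L k" if "j = Suc r" "k \<le> r"
      using that row_count_iff[of k "L k" j] entry_range[of k "L k"] row_count_le[of k j] assms
      by (cases "L k = 0") (auto simp: cell_def)
    with True ell_beyond[of k] show ?thesis by (cases "k \<le> r") (auto simp: bold_b_def)
  next
    case False
    then show ?thesis by (simp only: bold_b_def complement if_False)
  qed
qed

lemma boxed_BII_iff:
  assumes "1 \<le> c" "c \<le> i" "i \<le> r"
  shows "boxed_BII r m T c i \<longleftrightarrow> row_count c i \<le> row_count (Suc c) (Suc i)"
  using bold_b_row_count[of c i] bold_b_row_count[of "Suc c" "Suc i"] assms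
    ell_antimono[of c "Suc c"] row_count_le[of c i] row_count_le[of "Suc c" "Suc i"]
  by (auto simp: boxed_BII_def theta_def)

lemma stage_reached:
  assumes "1 \<le> c" "c \<le> i" "i \<le> r"
  shows "bzl_apply (lw (i - 1) @ rev [Suc c..<Suc i]) (reading_word r m T) = reading_word r m (stage T i c)"
  using stage_after_blocks[of i] stage_block[of c i] assms by (simp add: bzl_apply_append)

end

lemma length_lw: "2 * length (lw n) = n * (n + 1)"
  by (induction n) (auto simp: algebra_simps)

lemma lw_prefix: "i \<le> r \<Longrightarrow> \<exists>zs. lw r = lw i @ zs"
  by (induction r rule: dec_induct) auto

text \<open>The entry a_(i,j) belongs to the letter c = i-j+1 of block i, preceded by blocks
  1..i-1 and the letters i, ..., c+1.\<close>

lemma lw_entry: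
  assumes "1 \<le> j" "j \<le> i" "i \<le> r"
  shows "take (tri_idx i j - 1) (lw r) = lw (i - 1) @ rev [Suc (i - j + 1)..<Suc i]"
    and "lw r ! (tri_idx i j - 1) = i - j + 1"
proof -
  let ?c = "i - j + 1" and ?A = "lw (i - 1) @ rev [Suc (i - j + 1)..<Suc i]"
  obtain zs where "lw r = lw i @ zs" using lw_prefix[OF assms(3)] by blast
  moreover have "lw i = lw (i - 1) @ rev [1..<Suc i]" using lw.simps(2)[of "i - 1"] assms by simp
  moreover have "rev [1..<Suc i] = rev [Suc ?c..<Suc i] @ ?c # rev [1..<?c]"
    using upt_split[of 1 ?c "Suc i"] upt_conv_Cons[of ?c "Suc i"] assms by simp
  ultimately have lw_r: "lw r = ?A @ ?c # (rev [1..<?c] @ zs)" by simp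
  have "2 * length (lw (i - 1)) = i * (i - 1)" using length_lw[of "i - 1"] assms by simp
  then have "length ?A = i * (i - 1) div 2 + (j - 1)" using assms by (simp del: upt_Suc)
  then have "tri_idx i j - 1 = length ?A" using assms by (simp add: tri_idx_def)
  then show "take (tri_idx i j - 1) (lw r) = ?A" and "lw r ! (tri_idx i j - 1) = ?c"
    unfolding lw_r by (simp_all add: nth_append del: upt_Suc)
qed

theorem mainTheorem4:
  fixes r :: nat and m :: "nat \<Rightarrow> nat" and T :: "nat \<Rightarrow> nat \<Rightarrow> nat" and i j :: nat
  assumes "1 \<le> r"
    and "SSYT r m T"
    and "1 \<le> j" and "j \<le> i" and "i \<le> r"
  shows "boxed_BI r (reading_word r m T) (tri_idx i j) \<longleftrightarrow> boxed_BII r m T (i - j + 1) i"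
proof -
  interpret ssyt r m T by (rule ssyt.intro) fact
  let ?c = "i - j + 1"
  have c: "1 \<le> ?c" "?c \<le> i" using assms by auto
  have "boxed_BI r (reading_word r m T) (tri_idx i j) \<longleftrightarrow>
        f_word ?c (reading_word r m (stage T i ?c)) = None"
    unfolding boxed_BI_def lw_entry[OF assms(3-5)] stage_reached[OF c assms(5)] ..
  also have "\<dots> \<longleftrightarrow> row_count ?c i \<le> row_count (Suc ?c) (Suc i)"
    using stage_f_none[OF c assms(5)] .
  also have "\<dots> \<longleftrightarrow> boxed_BII r m T ?c i"
    using boxed_BII_iff[OF c assms(5)] by simp
  finally show ?thesis .
qed

end
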